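(* If $m$ and $n$ are non-negative integers, then $$\sum_{k = 1}^n \sum_{j = 0}^{k - 1} \frac{( n - j)!}{k - j}\binom{n}{j}\left\{ {m \atop n - j} \right\} = n^m H_n - \sum_{k = 1}^n \frac{( n - k)^m }{k} .$$
   Context: $\left\{ {m \atop p} \right\}$ denotes the Stirling number of the second kind; $H_n=\sum_{i=1}^n\frac1i$; the convention $0^0=1$ is used. Empty sums are zero. *)

theory Defs
  imports "HOL-Analysis.Analysis" "HOL-Combinatorics.Stirling"
begin

end

theory Submission
  imports Defs
begin

(* Both sides equal \<Sum>i. i! (n choose i) S(m,i) H_i. On the left, exchanging the two sums
   turns the inner sum over k into H_(n-j), and j = n - i. On the right, expanding
   x^m = \<Sum>i. S(m,i) i! (x choose i) reduces the claim to
   \<Sum>k=1..n. (n-k choose i)/k = (n choose i) (H_n - H_i), proved by Pascal's rule. *)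

lemma power_eq_sum_Stirling_falling_factorial:
  fixes x :: "'a::comm_ring_1"
  shows "x ^ m = (\<Sum>i\<le>m. of_nat (Stirling m i) * (\<Prod>l<i. x - of_nat l))"
proof (induction m)
  case 0
  then show ?case by simp
next
  case (Suc m)
  define P where "P i = (\<Prod>l<i. x - of_nat l)" for i
  have x_times_P: "x * P i = of_nat i * P i + P (Suc i)" for i
    by (simp add: P_def algebra_simps)
  have shift: "(\<Sum>i\<le>m. of_nat (Stirling m i * i) * P i)
      = (\<Sum>i\<le>m. of_nat (Stirling m (Suc i) * Suc i) * P (Suc i))"
  proof -
    have "(\<Sum>i\<le>m. of_nat (Stirling m i * i) * P i)
        = (\<Sum>i\<le>Suc m. of_nat (Stirling m i * i) * P i)"
      by simp
    then show ?thesis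
      by (simp only: sum.atMost_Suc_shift) simp
  qed
  have "x ^ Suc m = (\<Sum>i\<le>m. of_nat (Stirling m i) * (of_nat i * P i + P (Suc i)))"
    using Suc by (simp add: P_def sum_distrib_left algebra_simps flip: x_times_P)
  also have "\<dots> = (\<Sum>i\<le>m. of_nat (Stirling m (Suc i) * Suc i) * P (Suc i))
      + (\<Sum>i\<le>m. of_nat (Stirling m i) * P (Suc i))"
    unfolding shift[symmetric] by (simp add: algebra_simps sum.distrib)
  also have "\<dots> = (\<Sum>i\<le>Suc m. of_nat (Stirling (Suc m) i) * P i)"
    by (subst sum.atMost_Suc_shift) (simp add: algebra_simps sum.distrib)
  finally show ?case by (simp add: P_def)
qed

lemma of_nat_power_eq_sum_Stirling_binomial:
  "(of_nat x :: 'a::field_char_0) ^ m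
     = (\<Sum>i\<le>m. of_nat (Stirling m i) * fact i * of_nat (x choose i))"
  by (simp add: power_eq_sum_Stirling_falling_factorial binomial_gbinomial gbinomial_mult_fact
      atLeast0LessThan mult.assoc)

lemma sum_inverse_diff_eq_harm:
  assumes "j \<le> n"
  shows "(\<Sum>k=Suc j..n. inverse (of_nat (k - j))) = (harm (n - j) :: 'a::real_normed_field)"
proof -
  have "{Suc j..n} = {1 + j..(n - j) + j}"
    using assms by simp
  then have "(\<Sum>k=Suc j..n. inverse (of_nat (k - j)))
      = (\<Sum>i=1..n - j. inverse (of_nat (i + j - j)) :: 'a)"
    by (simp only: sum.shift_bounds_cl_nat_ivl)
  then show ?thesis
    by (simp add: harm_def)
qed

lemma sum_triangle_div_diff_eq_harm:
  fixes a :: "nat \<Rightarrow> 'a::real_normed_field"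
  shows "(\<Sum>k=1..n. \<Sum>j=0..k-1. a j / of_nat (k - j)) = (\<Sum>j<n. a j * harm (n - j))"
proof -
  have "(\<Sum>k=1..n. \<Sum>j=0..k-1. a j / of_nat (k - j))
      = (\<Sum>k=0..n. \<Sum>j=0..<k. a j / of_nat (k - j))"
    by (rule sum.mono_neutral_cong_left) (auto simp: atLeastLessThanSuc_atLeastAtMost[symmetric])
  also have "\<dots> = (\<Sum>j=0..<n. \<Sum>k=Suc j..n. a j / of_nat (k - j))"
    by (rule sum.nested_swap)
  also have "\<dots> = (\<Sum>j<n. a j * harm (n - j))"
    by (intro sum.cong) (auto simp: atLeast0LessThan divide_inverse
        simp flip: sum_distrib_left sum_inverse_diff_eq_harm)
  finally show ?thesis .
qed

lemma sum_binomial_diff_div_eq: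
  "(\<Sum>k=1..n. of_nat ((n - k) choose i) / of_nat k)
     = of_nat (n choose i) * (harm n - harm i :: 'a::real_normed_field)"
proof (induction n arbitrary: i)
  case 0
  then show ?case by (cases i) (simp_all add: harm_expand)
next
  case (Suc n)
  show ?case
  proof (cases i)
    case 0
    then show ?thesis by (simp add: harm_def divide_inverse)
  next
    case (Suc i')
    have "(\<Sum>k=1..Suc n. of_nat ((Suc n - k) choose i) / of_nat k)
        = (\<Sum>k=1..n. of_nat ((Suc n - k) choose i) / (of_nat k :: 'a))"
      using Suc by simp
    also have "\<dots> = (\<Sum>k=1..n. of_nat ((n - k) choose i) / of_nat k
        + of_nat ((n - k) choose i') / (of_nat k :: 'a))"
      by (intro sum.cong) (simp_all add: Suc Suc_diff_le add_divide_distrib)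
    also have "\<dots> = of_nat (n choose i) * (harm n - harm i)
        + of_nat (n choose i') * (harm n - harm i')"
      using Suc.IH by (simp add: sum.distrib)
    also have "\<dots> = of_nat (Suc n choose i) * (harm (Suc n) - harm i)"
    proof -
      have "of_nat (Suc n choose i) * of_nat i = (of_nat (n choose i') * of_nat (Suc n) :: 'a)"
        using Suc_times_binomial[of i' n] Suc by (metis mult.commute of_nat_mult)
      moreover have "(of_nat (Suc n) :: 'a) \<noteq> 0" "(of_nat i :: 'a) \<noteq> 0"
        using Suc by (simp_all del: of_nat_Suc)
      ultimately have absorb:
          "of_nat (Suc n choose i) / of_nat (Suc n) = (of_nat (n choose i') / of_nat i :: 'a)"
        by (metis frac_eq_eq)
      have "harm (Suc n) = harm n + 1 / (of_nat (Suc n) :: 'a)"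
          "harm i = harm i' + 1 / (of_nat i :: 'a)"
        using Suc by (simp_all add: harm_Suc field_simps)
      then show ?thesis
        using absorb Suc by (simp add: algebra_simps add_divide_distrib)
    qed
    finally show ?thesis .
  qed
qed

lemma power_harm_minus_sum_power_div:
  "of_nat n ^ m * harm n - (\<Sum>k=1..n. of_nat (n - k) ^ m / of_nat k)
     = (\<Sum>i\<le>m. fact i * of_nat (n choose i) * of_nat (Stirling m i)
          * (harm i :: 'a::real_normed_field))"
proof -
  define c :: "nat \<Rightarrow> 'a" where "c i = of_nat (Stirling m i) * fact i" for i
  have "(\<Sum>k=1..n. of_nat (n - k) ^ m / of_nat k)
      = (\<Sum>k=1..n. \<Sum>i\<le>m. c i * (of_nat ((n - k) choose i) / of_nat k))"
    by (simp only: of_nat_power_eq_sum_Stirling_binomial c_def sum_divide_distrib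
        times_divide_eq_right)
  also have "\<dots> = (\<Sum>i\<le>m. c i * of_nat (n choose i) * (harm n - harm i))"
    by (subst sum.swap) (simp only: sum_binomial_diff_div_eq mult.assoc flip: sum_distrib_left)
  finally show ?thesis
    by (simp add: of_nat_power_eq_sum_Stirling_binomial c_def sum_distrib_right
        flip: sum_subtractf) (simp add: algebra_simps)
qed

theorem proposition16:
  fixes m n :: nat
  shows "(\<Sum>k=1..n. \<Sum>j=0..k-1.
            fact (n - j) / real (k - j) * real (n choose j) * real (Stirling m (n - j)))
         = real n ^ m * harm n - (\<Sum>k=1..n. real (n - k) ^ m / real k)"
proof -
  define t :: "nat \<Rightarrow> real" where
    "t i = fact i * real (n choose i) * real (Stirling m i) * harm i" for i
  have "(\<Sum>k=1..n. \<Sum>j=0..k-1.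
            fact (n - j) / real (k - j) * real (n choose j) * real (Stirling m (n - j)))
      = (\<Sum>j<n. fact (n - j) * real (n choose j) * real (Stirling m (n - j)) * harm (n - j))"
    using sum_triangle_div_diff_eq_harm
        [of "\<lambda>j. fact (n - j) * real (n choose j) * real (Stirling m (n - j))"]
    by (simp add: ac_simps)
  also have "\<dots> = (\<Sum>j<n. t (n - j))"
    by (intro sum.cong) (simp_all add: t_def flip: binomial_symmetric)
  also have "\<dots> = (\<Sum>i=1..n. t i)"
    by (simp add: sum.atLeast1_atMost_eq flip: sum.nat_diff_reindex[of "\<lambda>j. t (n - j)"])
  also have "\<dots> = (\<Sum>i\<le>m + n. t i)"
    by (rule sum.mono_neutral_left) (auto simp: t_def harm_expand not_le)
  also have "\<dots> = (\<Sum>i\<le>m. t i)"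
    by (rule sum.mono_neutral_right) (auto simp: t_def)
  also have "\<dots> = real n ^ m * harm n - (\<Sum>k=1..n. real (n - k) ^ m / real k)"
    unfolding t_def by (rule power_harm_minus_sum_power_div [symmetric])
  finally show ?thesis .
qed

end
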